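(* Let $n\ge 1$ and let $q$ be generic. Regard ${\mathbb{C}}^n$ as the $n$-dimensional irreducible $U_q(sl_2)$-module $V_{n-1}$. Then its braided zeta function is \[\zeta_t(V_{n-1})=\prod_{\substack{j=-(n-1)\\ \text{step } 2}}^{n-1}\frac{1}{1-q^jt},\] i.e. the product of $1/(1-q^jt)$ over $j\in\{-(n-1),-(n-3),\dots,n-1\}$.
   Context: Throughout, $q\in{\mathbb{C}}$ is generic (not a root of unity) and $(m)_q=(q^m-q^{-m})/(q-q^{-1})$. $V_p$ denotes the irreducible $(p+1)$-dimensional module of $U_q(sl_2)$ (the $q$-deformation of the irreducible $(p+1)$-dimensional $sl_2$-module, also denoted $V_p$). Finite-dimensional $U_q(sl_2)$-modules form a ribbon braided category whose multiplicative braided dimension satisfies $\underline{\dim}'(V_p)=(p+1)_q$, extended additively to direct sums. For a module $A$, $A^{(j)}\subseteq A^{\otimes j}$ is the subspace invariant under the $q$-Hecke algebra generated by (suitably normalised) braidings of adjacent tensor factors; for generic $q$, $A^{(j)}$ decomposes into irreducibles $V_p$ with the same multiplicities as the classical symmetric power $S^j(A)$ of the corresponding $sl_2$-module. The braided zeta function is $\zeta_t(A)=\sum_{j\ge0}t^j\,\underline{\dim}'(A^{(j)})$. *)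

theory Defs
  imports Complex_Main "HOL-Library.Multiset" "HOL-Computational_Algebra.Formal_Power_Series"
begin

definition qint :: "complex \<Rightarrow> nat \<Rightarrow> complex" where
  "qint q m = (q ^ m - inverse q ^ m) / (q - inverse q)"

definition generic_q :: "complex \<Rightarrow> bool" where
  "generic_q q \<longleftrightarrow> q \<noteq> 0 \<and> (\<forall>k::nat. k > 0 \<longrightarrow> q ^ k \<noteq> 1)"

text \<open>A finite-dimensional (q-deformed) sl_2-module, up to isomorphism, is recorded by
  its multiplicity function: m p = multiplicity of V_p.  The multiplicative braided
  dimension is extended additively: dim'(V_p) = (p+1)_q.\<close>
definition braided_dim :: "complex \<Rightarrow> (nat \<Rightarrow> int) \<Rightarrow> complex" where
  "braided_dim q m = (\<Sum>p\<in>{p. m p \<noteq> 0}. of_int (m p) * qint q (p + 1))"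

text \<open>Weights of V_{n-1} = C^n: the basis vectors e_0..e_{n-1} have weights 2i-(n-1).
  Weight multiplicity of the classical symmetric power S^j(V_{n-1}) at weight w:
  number of degree-j monomials (multisets of basis indices) of total weight w.\<close>
definition sym_wt_mult :: "nat \<Rightarrow> nat \<Rightarrow> int \<Rightarrow> nat" where
  "sym_wt_mult n j w = card {M. set_mset M \<subseteq> {..<n} \<and> size M = j \<and>
      sum_mset (image_mset (\<lambda>i. 2 * int i - (int n - 1)) M) = w}"

text \<open>Multiplicity of V_p in the classical symmetric power S^j(V_{n-1}) (standard sl_2
  theory: dim of weight-p space minus dim of weight-(p+2) space). By the stated fact,
  this is also the multiplicity of V_p in the braided symmetric power V_{n-1}^{(j)}.\<close>
definition sym_irr_mult :: "nat \<Rightarrow> nat \<Rightarrow> nat \<Rightarrow> int" where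
  "sym_irr_mult n j p = int (sym_wt_mult n j (int p)) - int (sym_wt_mult n j (int p + 2))"

definition braided_zeta :: "complex \<Rightarrow> nat \<Rightarrow> complex fps" where
  "braided_zeta q n = Abs_fps (\<lambda>j. braided_dim q (sym_irr_mult n j))"

end

theory Submission
  imports Defs
begin

text \<open>A monomial of degree j in the basis e_0, ..., e_(n-1) of V_(n-1) is a multiset M of
  indices, of weight wt M = \<Sum>(2i - (n-1)) over i in M. Telescoping the quantum integers,
  (k+2)_q - (k)_q = q^(k+1) + q^-(k+1), and using the symmetry w \<mapsto> -w of the weight
  multiplicities shows that the braided dimension of the j-th symmetric power is its
  q-character \<Sum>_M q^(wt M). As q^(wt M) is the product of the factors q^(2i-(n-1)) over the
  indices in M, the generating function in t is the product of the geometric series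
  1/(1 - q^(2i-(n-1)) t).\<close>

lemma inverse_one_minus_const_fps_X:
  fixes c :: "'a::field_char_0"
  shows "inverse (1 - fps_const c * fps_X) = Abs_fps (\<lambda>k. c ^ k)"
  using one_minus_const_fps_X_neg_power'[of 1 c] by simp

lemma sum_prod_mset_multisets_of_size_lessThan_Suc:
  fixes x :: "nat \<Rightarrow> 'a::comm_semiring_1"
  shows "(\<Sum>M\<in>multisets_of_size {..<Suc n} j. \<Prod>\<^sub># (image_mset x M))
       = (\<Sum>m=0..j. x n ^ m * (\<Sum>M\<in>multisets_of_size {..<n} (j - m). \<Prod>\<^sub># (image_mset x M)))"
proof -
  have bij: "bij_betw (\<lambda>(m, M). M + replicate_mset m n)
      (SIGMA m:{0..j}. multisets_of_size {..<n} (j - m)) (multisets_of_size {..<Suc n} j)"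
    using bij_betw_multisets_of_size_insert[of n "{..<n}" j] by (simp add: lessThan_Suc)
  have "(\<Sum>M\<in>multisets_of_size {..<Suc n} j. \<Prod>\<^sub># (image_mset x M))
      = (\<Sum>(m, M)\<in>(SIGMA m:{0..j}. multisets_of_size {..<n} (j - m)).
           \<Prod>\<^sub># (image_mset x (M + replicate_mset m n)))"
    using sum.reindex_bij_betw[OF bij, of "\<lambda>M. \<Prod>\<^sub># (image_mset x M)"]
    by (simp add: split_def)
  also have "\<dots> = (\<Sum>m=0..j. \<Sum>M\<in>multisets_of_size {..<n} (j - m). x n ^ m * \<Prod>\<^sub># (image_mset x M))"
    by (subst sum.Sigma) (auto simp: finite_multisets_of_size mult.commute)
  finally show ?thesis
    by (simp add: sum_distrib_left)
qed

lemma Abs_fps_sum_prod_mset_multisets_of_size: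
  fixes x :: "nat \<Rightarrow> 'a::field_char_0"
  shows "Abs_fps (\<lambda>j. \<Sum>M\<in>multisets_of_size {..<n} j. \<Prod>\<^sub># (image_mset x M))
       = (\<Prod>k<n. inverse (1 - fps_const (x k) * fps_X))"
proof (induction n)
  case 0
  show ?case
    by (rule fps_ext) (simp add: multisets_of_size_def)
next
  case (Suc n)
  have "(\<Prod>k<Suc n. inverse (1 - fps_const (x k) * fps_X))
      = Abs_fps (\<lambda>m. x n ^ m) * Abs_fps (\<lambda>j. \<Sum>M\<in>multisets_of_size {..<n} j. \<Prod>\<^sub># (image_mset x M))"
    unfolding prod.lessThan_Suc Suc.IH inverse_one_minus_const_fps_X by (rule mult.commute)
  also have "\<dots> = Abs_fps (\<lambda>j. \<Sum>M\<in>multisets_of_size {..<Suc n} j. \<Prod>\<^sub># (image_mset x M))"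
    by (rule fps_ext) (simp add: fps_mult_nth sum_prod_mset_multisets_of_size_lessThan_Suc)
  finally show ?case ..
qed

lemma generic_q_nonzero:
  assumes "generic_q q"
  shows "q \<noteq> 0" and "q - inverse q \<noteq> 0"
proof -
  show q0: "q \<noteq> 0"
    using assms by (simp add: generic_q_def)
  show "q - inverse q \<noteq> 0"
  proof
    assume "q - inverse q = 0"
    then have "q ^ 2 = 1"
      using q0 by (simp add: power2_eq_square field_simps)
    then show False
      using assms by (auto simp: generic_q_def dest: spec[of _ 2])
  qed
qed

lemma qint_Suc_Suc:
  assumes "q \<noteq> 0" and "q - inverse q \<noteq> 0"
  shows "qint q (Suc (Suc k)) = qint q k + (\<Sum>w\<in>{- int (Suc k), int (Suc k)}. q powi w)"
proof -
  have pair: "(\<Sum>w\<in>{- int (Suc k), int (Suc k)}. q powi w) = q ^ Suc k + inverse q ^ Suc k"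
    by (simp add: power_int_minus power_inverse del: of_nat_Suc)
  have "(q ^ Suc k + inverse q ^ Suc k) * (q - inverse q)
      = (q ^ Suc (Suc k) - inverse q ^ Suc (Suc k)) - (q ^ k - inverse q ^ k)"
    using assms(1) by (simp add: field_simps)
  then show ?thesis
    unfolding pair qint_def using assms(2) by (simp add: diff_divide_distrib[symmetric] field_simps)
qed

lemma sum_qint_telescope:
  fixes f :: "int \<Rightarrow> int"
  assumes "q \<noteq> 0" and "q - inverse q \<noteq> 0"
  shows "(\<Sum>p\<le>K. of_int (f (int p) - f (int p + 2)) * qint q (p + 1))
       = (\<Sum>p\<le>K. of_int (f (int p)) * (\<Sum>w\<in>{- int p, int p}. q powi w))
         - of_int (f (int K + 1)) * qint q K - of_int (f (int K + 2)) * qint q (K + 1)"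
proof (induction K)
  case 0
  then show ?case
    using assms(2) by (simp add: qint_def algebra_simps)
next
  case (Suc K)
  then show ?case
    using qint_Suc_Suc[OF assms, of K] by (simp add: algebra_simps)
qed

lemma sum_int_symmetric_interval:
  fixes g :: "int \<Rightarrow> 'a::comm_monoid_add"
  shows "(\<Sum>w\<in>{- int K..int K}. g w) = (\<Sum>p\<le>K. \<Sum>w\<in>{- int p, int p}. g w)"
proof (induction K)
  case 0
  then show ?case by simp
next
  case (Suc K)
  have "{- int (Suc K)..int (Suc K)} = {- int (Suc K), int (Suc K)} \<union> {- int K..int K}"
    by auto
  then have "(\<Sum>w\<in>{- int (Suc K)..int (Suc K)}. g w)
      = (\<Sum>w\<in>{- int (Suc K), int (Suc K)}. g w) + (\<Sum>w\<in>{- int K..int K}. g w)"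
    by (simp add: sum.union_disjoint add.assoc)
  with Suc.IH show ?case
    by (simp add: ac_simps)
qed

lemma braided_dim_shift2_diff:
  fixes f :: "int \<Rightarrow> int"
  assumes "q \<noteq> 0" and "q - inverse q \<noteq> 0"
    and even: "\<And>w. f (- w) = f w"
    and vanish: "\<And>w. int N < \<bar>w\<bar> \<Longrightarrow> f w = 0"
  shows "braided_dim q (\<lambda>p. f (int p) - f (int p + 2)) = (\<Sum>w\<in>{- int N..int N}. of_int (f w) * q powi w)"
proof -
  have support: "p \<le> N" if "f (int p) - f (int p + 2) \<noteq> 0" for p
    using that vanish[of "int p"] vanish[of "int p + 2"] by (cases "p \<le> N") auto
  have "braided_dim q (\<lambda>p. f (int p) - f (int p + 2))
      = (\<Sum>p\<le>N. of_int (f (int p) - f (int p + 2)) * qint q (p + 1))"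
    unfolding braided_dim_def
    by (rule sum.mono_neutral_left) (auto simp: support)
  also have "\<dots> = (\<Sum>p\<le>N. of_int (f (int p)) * (\<Sum>w\<in>{- int p, int p}. q powi w))"
    unfolding sum_qint_telescope[OF assms(1,2)] by (simp add: vanish)
  also have "\<dots> = (\<Sum>p\<le>N. \<Sum>w\<in>{- int p, int p}. of_int (f w) * q powi w)"
    by (auto simp: sum_distrib_left even intro!: sum.cong)
  also have "\<dots> = (\<Sum>w\<in>{- int N..int N}. of_int (f w) * q powi w)"
    by (rule sum_int_symmetric_interval[symmetric])
  finally show ?thesis .
qed

definition weight :: "nat \<Rightarrow> nat multiset \<Rightarrow> int" where
  "weight n M = (\<Sum>i\<in>#M. 2 * int i - (int n - 1))"

definition mirror :: "nat \<Rightarrow> nat multiset \<Rightarrow> nat multiset" where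
  "mirror n M = image_mset (\<lambda>i. n - 1 - i) M"

lemma sym_wt_mult_eq_card: "sym_wt_mult n j w = card {M\<in>multisets_of_size {..<n} j. weight n M = w}"
  by (simp add: sym_wt_mult_def multisets_of_size_def weight_def conj_assoc)

lemma abs_weight_le:
  assumes "set_mset M \<subseteq> {..<n}"
  shows "\<bar>weight n M\<bar> \<le> int (size M * (n - 1))"
proof -
  have term_bound: "\<bar>2 * int i - (int n - 1)\<bar> \<le> int (n - 1)" if "i \<in># M" for i
    using that assms by auto
  have "(\<Sum>i\<in>#M. - int (n - 1)) \<le> weight n M"
    unfolding weight_def by (rule sum_mset_mono) (use term_bound in force)
  moreover have "weight n M \<le> (\<Sum>i\<in>#M. int (n - 1))"
    unfolding weight_def by (rule sum_mset_mono) (use term_bound in force)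
  ultimately show ?thesis
    by simp
qed

lemma mirror_multisets_of_size:
  assumes "M \<in> multisets_of_size {..<n} j"
  shows "mirror n M \<in> multisets_of_size {..<n} j" and "mirror n (mirror n M) = M"
    and "weight n (mirror n M) = - weight n M"
proof -
  have below: "i < n" if "i \<in># M" for i
    using assms that by (auto simp: multisets_of_size_def)
  show "mirror n M \<in> multisets_of_size {..<n} j"
    using assms by (auto simp: multisets_of_size_def mirror_def)
  have "mirror n (mirror n M) = image_mset id M"
    unfolding mirror_def multiset.map_comp by (rule image_mset_cong) (auto dest: below)
  then show "mirror n (mirror n M) = M"
    by simp
  have "weight n (mirror n M) = (\<Sum>i\<in>#M. - 1 * (2 * int i - (int n - 1)))"
    unfolding weight_def mirror_def multiset.map_comp
    by (rule arg_cong[where f = sum_mset], rule image_mset_cong) (auto dest: below simp: of_nat_diff)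
  then show "weight n (mirror n M) = - weight n M"
    by (simp only: weight_def flip: sum_mset_distrib_left)
qed

lemma sym_wt_mult_uminus: "sym_wt_mult n j (- w) = sym_wt_mult n j w"
proof -
  have "bij_betw (mirror n) {M\<in>multisets_of_size {..<n} j. weight n M = w}
      {M\<in>multisets_of_size {..<n} j. weight n M = - w}"
    by (rule bij_betw_byWitness[where f' = "mirror n"]) (auto simp: mirror_multisets_of_size)
  then show ?thesis
    by (simp add: sym_wt_mult_eq_card bij_betw_same_card)
qed

lemma braided_dim_sym_irr_mult:
  assumes "q \<noteq> 0" and "q - inverse q \<noteq> 0"
  shows "braided_dim q (sym_irr_mult n j) = (\<Sum>M\<in>multisets_of_size {..<n} j. q powi weight n M)"
proof -
  define N where "N = j * (n - 1)"
  define S where "S = multisets_of_size {..<n} j"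
  define f where "f w = int (sym_wt_mult n j w)" for w
  have finite_S: "finite S"
    by (simp add: S_def finite_multisets_of_size)
  have weight_bound: "weight n M \<in> {- int N..int N}" if "M \<in> S" for M
    using abs_weight_le[of M n] that by (auto simp: N_def S_def multisets_of_size_def abs_le_iff)
  have vanish: "f w = 0" if "int N < \<bar>w\<bar>" for w
  proof -
    have "{M\<in>S. weight n M = w} = {}"
      using weight_bound that by fastforce
    then show ?thesis
      unfolding f_def sym_wt_mult_eq_card S_def[symmetric] by (metis card.empty of_nat_0)
  qed
  have fibre: "of_int (f w) * q powi w = (\<Sum>M\<in>{M\<in>S. weight n M = w}. q powi weight n M)" for w
    by (simp add: f_def sym_wt_mult_eq_card flip: S_def)
  have "braided_dim q (sym_irr_mult n j) = (\<Sum>w\<in>{- int N..int N}. of_int (f w) * q powi w)"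
    using braided_dim_shift2_diff[OF assms, of f N] vanish
    by (simp add: f_def sym_wt_mult_uminus sym_irr_mult_def[abs_def])
  also have "\<dots> = (\<Sum>M\<in>S. q powi weight n M)"
    unfolding fibre by (rule sum.group) (auto simp: finite_S dest: weight_bound)
  finally show ?thesis
    by (simp add: S_def)
qed

lemma power_int_sum_mset:
  fixes q :: "'a::field"
  assumes "q \<noteq> 0"
  shows "q powi (\<Sum>i\<in>#M. f i) = (\<Prod>i\<in>#M. q powi f i)"
  using assms by (induction M) (simp_all add: power_int_add)

theorem theorem4p2:
  fixes q :: complex and n :: nat
  assumes "n \<ge> 1" and "generic_q q"
  shows "braided_zeta q n =
    (\<Prod>k<n. inverse (1 - fps_const (q powi (2 * int k - (int n - 1))) * fps_X))"
proof -
  note q = generic_q_nonzero[OF assms(2)]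
  have "braided_zeta q n = Abs_fps (\<lambda>j. \<Sum>M\<in>multisets_of_size {..<n} j. q powi weight n M)"
    by (simp add: braided_zeta_def braided_dim_sym_irr_mult[OF q])
  also have "\<dots> = Abs_fps (\<lambda>j. \<Sum>M\<in>multisets_of_size {..<n} j.
      \<Prod>\<^sub># (image_mset (\<lambda>k. q powi (2 * int k - (int n - 1))) M))"
    by (simp add: weight_def power_int_sum_mset[OF q(1)])
  also have "\<dots> = (\<Prod>k<n. inverse (1 - fps_const (q powi (2 * int k - (int n - 1))) * fps_X))"
    by (rule Abs_fps_sum_prod_mset_multisets_of_size)
  finally show ?thesis .
qed

end
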